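(* For each $h\in[H]$ there exist maps $\zeta_h,\chi_h:\mathcal M\to\mathbb R^{L_h/|\mathcal O|}$ such that for all $M,M'\in\mathcal M$, $\mathcal W_F(M,M',h)=\langle\zeta_h(M),\chi_h(M')\rangle$, and $\|\zeta_h(M)\|_2\|\chi_h(M')\|_2\le O(L_h/K)$.
   Context: Factored MDP setting: $\mathcal O$ finite, $\mathcal X=[H]\times\mathcal O^d$ layered by time, $|\mathcal A|=K$; known parent sets $\mathrm{pa}_i\subseteq[d]$; transitions $P(x'|x,a)=\prod_{i=1}^dP^{(i)}[x'[i]\mid x[\mathrm{pa}_i],a,h]$ for $x\in\mathcal X_h$; known reward $R^\star$ shared by all models; $\mathcal M$ is the set of all models with reward $R^\star$ and transitions factorizing with these parents, and the true model $M^\star\in\mathcal M$. $L_h=\sum_{i=1}^dK|\mathcal O|^{1+|\mathrm{pa}_i|}$. For a model $M$, $\pi_M$ is its greedy optimal policy; $x_h\sim\pi$ is the step-$h$ context when running $\pi$ in the true MDP; $(r,x')\sim M_h$ means $r\sim R^\star(x_h,a_h)$, $x'\sim P(x_h,a_h)$. Test class $\mathcal F=\{g_1+\dots+g_d:g_i\in\mathcal G_i\}$, $\mathcal G_i$ the set of all $\{-1,1\}$-valued functions of $(x,a,r,x')$ depending only on $(x[\mathrm{pa}_i],a,h,x'[i])$. $\mathcal W_F(M,M',h)=\max_{f\in\mathcal F}\mathbb E_{x_h\sim\pi_M,a_h\sim U(\mathcal A)}[\mathbb E_{(r,x')\sim M'_h}f(x_h,a_h,r,x')-\mathbb E_{(r,x')\sim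 M^\star_h}f(x_h,a_h,r,x')]$. *)

theory Defs
  imports "HOL-Library.FuncSet" Complex_Main
begin

text \<open>Observation space O = {..<m}; features indexed by {..<d}; actions {..<K};
  time steps (layers) h \<in> {..<H} (0-indexed).  A context at step h is a
  vector x \<in> O^d, represented as an extensional function on {..<d}.\<close>

type_synonym obs = "nat \<Rightarrow> nat"

text \<open>Transition components of a factored model:  T i h z a o'  is
  P^(i)[o' | x[pa_i] = z, a, h].\<close>
type_synonym ftrans = "nat \<Rightarrow> nat \<Rightarrow> obs \<Rightarrow> nat \<Rightarrow> nat \<Rightarrow> real"

definition Obs :: "nat \<Rightarrow> nat \<Rightarrow> obs set" where
  "Obs d m = ({..<d} \<rightarrow>\<^sub>E {..<m})"

text \<open>The class of all models with the given parent structure (reward shared).\<close>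
definition fmodels :: "nat \<Rightarrow> nat \<Rightarrow> nat \<Rightarrow> nat \<Rightarrow> (nat \<Rightarrow> nat set) \<Rightarrow> ftrans set" where
  "fmodels H d m K pa = {T. \<forall>i<d. \<forall>h<H. \<forall>z \<in> pa i \<rightarrow>\<^sub>E {..<m}. \<forall>a<K.
      (\<forall>o'<m. 0 \<le> T i h z a o') \<and> (\<Sum>o'<m. T i h z a o') = 1}"

definition trans_prob :: "nat \<Rightarrow> (nat \<Rightarrow> nat set) \<Rightarrow> ftrans \<Rightarrow> nat \<Rightarrow> obs \<Rightarrow> nat \<Rightarrow> obs \<Rightarrow> real" where
  "trans_prob d pa T h x a x' = (\<Prod>i<d. T i h (restrict x (pa i)) a (x' i))"

text \<open>Optimal value in model T with n steps to go (so at step H - n); R is the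
  (shared, known) mean reward  R h x a.\<close>
primrec value_togo :: "nat \<Rightarrow> nat \<Rightarrow> nat \<Rightarrow> nat \<Rightarrow> (nat \<Rightarrow> nat set) \<Rightarrow> (nat \<Rightarrow> obs \<Rightarrow> nat \<Rightarrow> real)
    \<Rightarrow> ftrans \<Rightarrow> nat \<Rightarrow> obs \<Rightarrow> real" where
  "value_togo H d m K pa R T 0 x = 0"
| "value_togo H d m K pa R T (Suc n) x =
     (MAX a \<in> {..<K}. R (H - Suc n) x a +
        (\<Sum>x'\<in>Obs d m. trans_prob d pa T (H - Suc n) x a x' * value_togo H d m K pa R T n x'))"

definition Qval :: "nat \<Rightarrow> nat \<Rightarrow> nat \<Rightarrow> nat \<Rightarrow> (nat \<Rightarrow> nat set) \<Rightarrow> (nat \<Rightarrow> obs \<Rightarrow> nat \<Rightarrow> real)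
    \<Rightarrow> ftrans \<Rightarrow> nat \<Rightarrow> obs \<Rightarrow> nat \<Rightarrow> real" where
  "Qval H d m K pa R T h x a =
     R h x a + (\<Sum>x'\<in>Obs d m. trans_prob d pa T h x a x' * value_togo H d m K pa R T (H - Suc h) x')"

definition greedy_policy :: "nat \<Rightarrow> nat \<Rightarrow> nat \<Rightarrow> nat \<Rightarrow> (nat \<Rightarrow> nat set) \<Rightarrow> (nat \<Rightarrow> obs \<Rightarrow> nat \<Rightarrow> real)
    \<Rightarrow> ftrans \<Rightarrow> nat \<Rightarrow> obs \<Rightarrow> nat" where
  "greedy_policy H d m K pa R T h x =
     (LEAST a. a < K \<and> (\<forall>b<K. Qval H d m K pa R T h x b \<le> Qval H d m K pa R T h x a))"

primrec state_dist :: "nat \<Rightarrow> nat \<Rightarrow> (nat \<Rightarrow> nat set) \<Rightarrow> ftrans \<Rightarrow> (obs \<Rightarrow> real)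
    \<Rightarrow> (nat \<Rightarrow> obs \<Rightarrow> nat) \<Rightarrow> nat \<Rightarrow> obs \<Rightarrow> real" where
  "state_dist d m pa Tstar mu0 pol 0 x = mu0 x"
| "state_dist d m pa Tstar mu0 pol (Suc h) x' =
     (\<Sum>x\<in>Obs d m. state_dist d m pa Tstar mu0 pol h x * trans_prob d pa Tstar h x (pol h x) x')"

text \<open>A test function f = g_1 + ... + g_d with
  g_i \<in> G_i is given by g :: i \<Rightarrow> x[pa_i] \<Rightarrow> a \<Rightarrow> x'[i] \<Rightarrow> {-1,1}
  (h is fixed; r is irrelevant since the g_i do not depend on it).\<close>
definition W_F :: "nat \<Rightarrow> nat \<Rightarrow> nat \<Rightarrow> nat \<Rightarrow> (nat \<Rightarrow> nat set) \<Rightarrow> (nat \<Rightarrow> obs \<Rightarrow> nat \<Rightarrow> real)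
    \<Rightarrow> (obs \<Rightarrow> real) \<Rightarrow> ftrans \<Rightarrow> ftrans \<Rightarrow> ftrans \<Rightarrow> nat \<Rightarrow> real" where
  "W_F H d m K pa R mu0 Tstar T T' h =
     (SUP g \<in> {g :: nat \<Rightarrow> obs \<Rightarrow> nat \<Rightarrow> nat \<Rightarrow> real. \<forall>i z a y. g i z a y \<in> {-1, 1}}.
        (\<Sum>x\<in>Obs d m. state_dist d m pa Tstar mu0 (greedy_policy H d m K pa R T) h x *
           (\<Sum>a<K. (1 / real K) *
              (\<Sum>x'\<in>Obs d m. (trans_prob d pa T' h x a x' - trans_prob d pa Tstar h x a x') *
                 (\<Sum>i<d. g i (restrict x (pa i)) a (x' i))))))"

definition L_dim :: "nat \<Rightarrow> nat \<Rightarrow> nat \<Rightarrow> (nat \<Rightarrow> nat set) \<Rightarrow> nat" where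
  "L_dim d m K pa = (\<Sum>i<d. K * m ^ (1 + card (pa i)))"

text \<open>Vectors in R^n as functions nat \<Rightarrow> real restricted to {..<n}.\<close>
definition vinner :: "nat \<Rightarrow> (nat \<Rightarrow> real) \<Rightarrow> (nat \<Rightarrow> real) \<Rightarrow> real" where
  "vinner n u v = (\<Sum>j<n. u j * v j)"

definition vnorm :: "nat \<Rightarrow> (nat \<Rightarrow> real) \<Rightarrow> real" where
  "vnorm n v = sqrt (\<Sum>j<n. (v j)\<^sup>2)"

end

theory Submission
  imports Defs
begin

(* A test f = g_1 + ... + g_d is a sum of factor-wise tests and P(. | x, a) is a product of its
   factors, so the expectation of g_i under P(. | x, a) only involves P^(i)(. | x[pa_i], a).
   Grouping contexts x by z = x[pa_i], W_F(M, M', h) becomes a sum over coordinates (i, z, a) of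
   Pr_{x_h ~ pi_M}[x_h[pa_i] = z] / K times the g_i-test of P'^(i) - P*^(i) at (z, a); the
   supremum over g is attained by the sign test and equals the L1 distance of the two factors.
   This is an inner product indexed by the L_h/|O| coordinates (i, z, a).  The marginals sum to 1
   for each i, so |zeta(M)|^2 <= d/K, and L1 distances of distributions are at most 2, so
   |chi(M')|^2 <= 4 L_h/|O|; as d K <= L_h/|O|, the product of the norms is at most 2 L_h/K. *)

lemma sum_PiE_prod_marginal:
  fixes p :: "'i \<Rightarrow> 'y \<Rightarrow> 'c :: comm_semiring_1"
  assumes I: "finite I" and Y: "finite Y" and i: "i \<in> I"
    and p: "\<And>j. j \<in> I \<Longrightarrow> sum (p j) Y = 1"
  shows "(\<Sum>x\<in>I \<rightarrow>\<^sub>E Y. (\<Prod>j\<in>I. p j (x j)) * f (x i)) = (\<Sum>y\<in>Y. p i y * f y)"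
proof -
  define q where "q j y = (if j = i then p j y * f y else p j y)" for j y
  have q_off_i: "(\<Prod>j\<in>I - {i}. q j (x j)) = (\<Prod>j\<in>I - {i}. p j (x j))" for x
    by (rule prod.cong) (auto simp: q_def)
  have "(\<Prod>j\<in>I. p j (x j)) * f (x i) = (\<Prod>j\<in>I. q j (x j))" for x
    using I i by (simp add: prod.remove q_off_i) (simp add: q_def mult_ac)
  then have "(\<Sum>x\<in>I \<rightarrow>\<^sub>E Y. (\<Prod>j\<in>I. p j (x j)) * f (x i)) = (\<Prod>j\<in>I. \<Sum>y\<in>Y. q j y)"
    using I Y by (simp add: prod_sum_PiE)
  also have "\<dots> = (\<Sum>y\<in>Y. q i y) * (\<Prod>j\<in>I - {i}. \<Sum>y\<in>Y. q j y)"
    using I i by (simp add: prod.remove)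
  also have "(\<Prod>j\<in>I - {i}. \<Sum>y\<in>Y. q j y) = 1"
    by (rule prod.neutral) (auto simp: q_def p)
  finally show ?thesis by (simp add: q_def)
qed

lemma sum_PiE_prod_eq_1:
  fixes p :: "'i \<Rightarrow> 'y \<Rightarrow> 'c :: comm_semiring_1"
  assumes "finite I" "finite Y" and "\<And>j. j \<in> I \<Longrightarrow> sum (p j) Y = 1"
  shows "(\<Sum>x\<in>I \<rightarrow>\<^sub>E Y. \<Prod>j\<in>I. p j (x j)) = 1"
  using assms by (simp add: prod_sum_PiE[symmetric])

lemma finite_Obs: "finite (Obs d m)"
  unfolding Obs_def by (auto intro: finite_PiE)

lemma greedy_policy_less:
  assumes "0 < K"
  shows "greedy_policy H d m K pa R T h x < K"
proof -
  let ?Q = "Qval H d m K pa R T h x"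
  have "Max (?Q ` {..<K}) \<in> ?Q ` {..<K}"
    using assms by (intro Max_in) auto
  then obtain a where "a < K" "?Q a = Max (?Q ` {..<K})"
    by auto
  then have "\<exists>a. a < K \<and> (\<forall>b<K. ?Q b \<le> ?Q a)"
    by auto
  then show ?thesis
    unfolding greedy_policy_def by (rule LeastI2_ex) blast
qed

lemma vinner_bij_betw:
  "bij_betw e {..<n} S \<Longrightarrow> vinner n (\<lambda>j. u (e j)) (\<lambda>j. v (e j)) = (\<Sum>s\<in>S. u s * v s)"
  unfolding vinner_def by (rule sum.reindex_bij_betw)

lemma vnorm_nonneg: "0 \<le> vnorm n v"
  unfolding vnorm_def by (simp add: sum_nonneg)

lemma vnorm_bij_betw:
  "bij_betw e {..<n} S \<Longrightarrow> vnorm n (\<lambda>j. u (e j)) = sqrt (\<Sum>s\<in>S. (u s)\<^sup>2)"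
  unfolding vnorm_def by (simp add: sum.reindex_bij_betw[of e _ _ "\<lambda>s. (u s)\<^sup>2"])

lemma sqrt_div_mult_sqrt_le:
  fixes d k n :: nat
  assumes "0 < k" and "d * k \<le> n"
  shows "sqrt (real d / real k) * sqrt (4 * real n) \<le> 2 * real n / real k"
proof -
  have "real d \<le> real n / real k"
    using assms by (simp add: field_simps flip: of_nat_mult)
  then have "real d / real k * (4 * real n) \<le> real n / real k / real k * (4 * real n)"
    by (intro mult_right_mono divide_right_mono) auto
  also have "\<dots> = (2 * real n / real k)\<^sup>2"
    by (simp add: power2_eq_square field_simps)
  finally have squared: "real d / real k * (4 * real n) \<le> (2 * real n / real k)\<^sup>2" .
  have "sqrt (real d / real k) * sqrt (4 * real n) = sqrt (real d / real k * (4 * real n))"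
    by (rule real_sqrt_mult[symmetric])
  also have "\<dots> \<le> sqrt ((2 * real n / real k)\<^sup>2)"
    using squared by (rule real_sqrt_le_mono)
  also have "\<dots> = 2 * real n / real k"
    by simp
  finally show ?thesis .
qed

locale factored_mdp =
  fixes H d m K :: nat and pa :: "nat \<Rightarrow> nat set" and Tstar :: ftrans and mu0 :: "obs \<Rightarrow> real"
  assumes m_pos: "0 < m" and K_pos: "0 < K" and parents_sub: "\<And>i. i < d \<Longrightarrow> pa i \<subseteq> {..<d}"
    and Tstar_model: "Tstar \<in> fmodels H d m K pa"
    and mu0_nonneg: "\<And>x. x \<in> Obs d m \<Longrightarrow> 0 \<le> mu0 x" and mu0_sum: "(\<Sum>x\<in>Obs d m. mu0 x) = 1"
begin

definition parent_configs :: "nat \<Rightarrow> obs set" where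
  "parent_configs i = pa i \<rightarrow>\<^sub>E {..<m}"

definition feature_index :: "(nat \<times> obs \<times> nat) set" where
  "feature_index = (SIGMA i:{..<d}. parent_configs i \<times> {..<K})"

definition marginal :: "(obs \<Rightarrow> real) \<Rightarrow> nat \<Rightarrow> obs \<Rightarrow> real" where
  "marginal D i z = (\<Sum>x\<in>{x\<in>Obs d m. restrict x (pa i) = z}. D x)"

definition l1_dist :: "nat \<Rightarrow> ftrans \<Rightarrow> nat \<Rightarrow> obs \<Rightarrow> nat \<Rightarrow> real" where
  "l1_dist h T i z a = (\<Sum>y<m. \<bar>T i h z a y - Tstar i h z a y\<bar>)"

lemma finite_parents: "i < d \<Longrightarrow> finite (pa i)"
  using finite_subset[OF parents_sub] by blast

lemma finite_parent_configs: "i < d \<Longrightarrow> finite (parent_configs i)"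
  unfolding parent_configs_def by (simp add: finite_parents finite_PiE)

lemma restrict_in_parent_configs: "x \<in> Obs d m \<Longrightarrow> i < d \<Longrightarrow> restrict x (pa i) \<in> parent_configs i"
  using parents_sub unfolding Obs_def parent_configs_def by (auto simp: PiE_iff)

lemma fmodels_sum_eq_1:
  "T \<in> fmodels H d m K pa \<Longrightarrow> i < d \<Longrightarrow> h < H \<Longrightarrow> z \<in> parent_configs i \<Longrightarrow> a < K
    \<Longrightarrow> (\<Sum>y<m. T i h z a y) = 1"
  unfolding fmodels_def parent_configs_def by auto

lemma fmodels_nonneg:
  "T \<in> fmodels H d m K pa \<Longrightarrow> i < d \<Longrightarrow> h < H \<Longrightarrow> z \<in> parent_configs i \<Longrightarrow> a < K
    \<Longrightarrow> y < m \<Longrightarrow> 0 \<le> T i h z a y"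
  unfolding fmodels_def parent_configs_def by auto

lemma sum_trans_prob_marginal:
  assumes "T \<in> fmodels H d m K pa" "h < H" "x \<in> Obs d m" "a < K" "i < d"
  shows "(\<Sum>x'\<in>Obs d m. trans_prob d pa T h x a x' * f (x' i))
       = (\<Sum>y<m. T i h (restrict x (pa i)) a y * f y)"
  unfolding trans_prob_def Obs_def
  using assms restrict_in_parent_configs[OF assms(3)]
  by (intro sum_PiE_prod_marginal[of "{..<d}" "{..<m}" i "\<lambda>j. T j h (restrict x (pa j)) a"])
    (simp_all add: fmodels_sum_eq_1)

lemma sum_trans_prob_eq_1:
  assumes "T \<in> fmodels H d m K pa" "h < H" "x \<in> Obs d m" "a < K"
  shows "(\<Sum>x'\<in>Obs d m. trans_prob d pa T h x a x') = 1"
  unfolding trans_prob_def Obs_def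
  using assms restrict_in_parent_configs[OF assms(3)]
  by (intro sum_PiE_prod_eq_1[of "{..<d}" "{..<m}" "\<lambda>j. T j h (restrict x (pa j)) a"])
    (simp_all add: fmodels_sum_eq_1)

lemma trans_prob_nonneg:
  assumes "T \<in> fmodels H d m K pa" "h < H" "x \<in> Obs d m" "a < K" "x' \<in> Obs d m"
  shows "0 \<le> trans_prob d pa T h x a x'"
  unfolding trans_prob_def
proof (rule prod_nonneg)
  fix j assume j: "j \<in> {..<d}"
  then have "x' j < m"
    using PiE_mem[OF assms(5)[unfolded Obs_def]] by simp
  then show "0 \<le> T j h (restrict x (pa j)) a (x' j)"
    using j fmodels_nonneg[OF assms(1) _ assms(2) restrict_in_parent_configs[OF assms(3)] assms(4)]
    by auto
qed

lemma state_dist_distribution: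
  assumes pol: "\<And>h x. pol h x < K" and "h \<le> H"
  shows "(\<forall>x\<in>Obs d m. 0 \<le> state_dist d m pa Tstar mu0 pol h x)
     \<and> (\<Sum>x\<in>Obs d m. state_dist d m pa Tstar mu0 pol h x) = 1"
  using \<open>h \<le> H\<close>
proof (induction h)
  case 0
  then show ?case using mu0_nonneg mu0_sum by simp
next
  case (Suc n)
  let ?p = "state_dist d m pa Tstar mu0 pol n"
  from Suc have n: "n < H" and IH: "\<forall>x\<in>Obs d m. 0 \<le> ?p x" "(\<Sum>x\<in>Obs d m. ?p x) = 1"
    by auto
  have "(\<Sum>x'\<in>Obs d m. state_dist d m pa Tstar mu0 pol (Suc n) x')
      = (\<Sum>x\<in>Obs d m. ?p x * (\<Sum>x'\<in>Obs d m. trans_prob d pa Tstar n x (pol n x) x'))"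
    unfolding state_dist.simps sum_distrib_left by (rule sum.swap)
  also have "\<dots> = 1"
    using IH(2) by (simp add: sum_trans_prob_eq_1[OF Tstar_model n _ pol])
  finally show ?case
    using IH(1) trans_prob_nonneg[OF Tstar_model n _ pol]
    by (auto intro!: sum_nonneg)
qed

lemma sum_Obs_by_parent_config:
  assumes "i < d"
  shows "(\<Sum>x\<in>Obs d m. D x * f (restrict x (pa i))) = (\<Sum>z\<in>parent_configs i. marginal D i z * f z)"
proof -
  have "(\<Sum>x\<in>Obs d m. D x * f (restrict x (pa i)))
      = (\<Sum>z\<in>parent_configs i. \<Sum>x\<in>{x\<in>Obs d m. restrict x (pa i) = z}. D x * f (restrict x (pa i)))"
    using assms restrict_in_parent_configs
    by (intro sum.group[symmetric] finite_Obs finite_parent_configs) auto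
  also have "\<dots> = (\<Sum>z\<in>parent_configs i. marginal D i z * f z)"
    by (simp add: marginal_def sum_distrib_right)
  finally show ?thesis .
qed

lemma sum_marginal: "i < d \<Longrightarrow> (\<Sum>z\<in>parent_configs i. marginal D i z) = (\<Sum>x\<in>Obs d m. D x)"
  using sum_Obs_by_parent_config[of i D "\<lambda>_. 1"] by simp

lemma marginal_nonneg: "(\<And>x. x \<in> Obs d m \<Longrightarrow> 0 \<le> D x) \<Longrightarrow> 0 \<le> marginal D i z"
  unfolding marginal_def by (auto intro: sum_nonneg)

lemma sum_feature_index:
  "(\<Sum>s\<in>feature_index. f s) = (\<Sum>i<d. \<Sum>z\<in>parent_configs i. \<Sum>a<K. f (i, z, a))"
proof -
  have "(\<Sum>s\<in>feature_index. f s) = (\<Sum>i<d. \<Sum>p\<in>parent_configs i \<times> {..<K}. f (i, p))"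
    unfolding feature_index_def by (subst sum.Sigma) (auto simp: finite_parent_configs)
  then show ?thesis
    by (simp add: sum.cartesian_product)
qed

lemma card_feature_index: "card feature_index = (\<Sum>i<d. K * m ^ card (pa i))"
proof -
  have "card feature_index = (\<Sum>i<d. card (parent_configs i \<times> {..<K}))"
    unfolding feature_index_def by (rule card_SigmaI) (auto simp: finite_parent_configs)
  also have "\<dots> = (\<Sum>i<d. K * m ^ card (pa i))"
    by (intro sum.cong) (simp_all add: parent_configs_def card_cartesian_product card_PiE finite_parents)
  finally show ?thesis .
qed

lemma card_feature_index_eq_L_dim_div: "card feature_index = L_dim d m K pa div m"
proof -
  have "L_dim d m K pa = m * card feature_index"
    unfolding L_dim_def card_feature_index by (simp add: sum_distrib_left algebra_simps)
  then show ?thesis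
    using m_pos by simp
qed

lemma mult_le_card_feature_index: "d * K \<le> card feature_index"
proof -
  have "(\<Sum>i<d. K) \<le> (\<Sum>i<d. K * m ^ card (pa i))"
    using m_pos by (intro sum_mono) simp
  then show ?thesis
    unfolding card_feature_index by (simp add: mult.commute)
qed

lemma finite_feature_index: "finite feature_index"
  unfolding feature_index_def by (auto simp: finite_parent_configs)

lemma greedy_state_dist_distribution:
  assumes "h \<le> H"
  shows "\<And>x. x \<in> Obs d m \<Longrightarrow> 0 \<le> state_dist d m pa Tstar mu0 (greedy_policy H d m K pa R T) h x"
    and "(\<Sum>x\<in>Obs d m. state_dist d m pa Tstar mu0 (greedy_policy H d m K pa R T) h x) = 1"
  using state_dist_distribution[OF greedy_policy_less[OF K_pos] assms] by auto

lemma expected_test_difference: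
  assumes T': "T' \<in> fmodels H d m K pa" and h: "h < H" and x: "x \<in> Obs d m" and a: "a < K"
  shows "(\<Sum>x'\<in>Obs d m. (trans_prob d pa T' h x a x' - trans_prob d pa Tstar h x a x') *
            (\<Sum>i<d. g i (restrict x (pa i)) a (x' i)))
       = (\<Sum>i<d. \<Sum>y<m. (T' i h (restrict x (pa i)) a y - Tstar i h (restrict x (pa i)) a y) *
            g i (restrict x (pa i)) a y)"
proof -
  have "(\<Sum>x'\<in>Obs d m. (trans_prob d pa T' h x a x' - trans_prob d pa Tstar h x a x') *
            (\<Sum>i<d. g i (restrict x (pa i)) a (x' i)))
      = (\<Sum>i<d. (\<Sum>x'\<in>Obs d m. trans_prob d pa T' h x a x' * g i (restrict x (pa i)) a (x' i))
            - (\<Sum>x'\<in>Obs d m. trans_prob d pa Tstar h x a x' * g i (restrict x (pa i)) a (x' i)))"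
    by (simp add: sum_distrib_left left_diff_distrib sum_subtractf sum.swap[of _ "Obs d m"])
  also have "\<dots> = (\<Sum>i<d. \<Sum>y<m. (T' i h (restrict x (pa i)) a y - Tstar i h (restrict x (pa i)) a y) *
            g i (restrict x (pa i)) a y)"
    by (simp add: sum_trans_prob_marginal[OF T' h x a] sum_trans_prob_marginal[OF Tstar_model h x a]
        left_diff_distrib sum_subtractf)
  finally show ?thesis .
qed

lemma test_objective_eq:
  assumes T': "T' \<in> fmodels H d m K pa" and h: "h < H"
  shows "(\<Sum>x\<in>Obs d m. D x * (\<Sum>a<K. (1 / real K) *
            (\<Sum>x'\<in>Obs d m. (trans_prob d pa T' h x a x' - trans_prob d pa Tstar h x a x') *
              (\<Sum>i<d. g i (restrict x (pa i)) a (x' i)))))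
       = (\<Sum>(i, z, a)\<in>feature_index.
            marginal D i z / real K * (\<Sum>y<m. (T' i h z a y - Tstar i h z a y) * g i z a y))"
proof -
  define Phi where
    "Phi i z = (\<Sum>a<K. (1 / real K) * (\<Sum>y<m. (T' i h z a y - Tstar i h z a y) * g i z a y))" for i z
  have "(\<Sum>x\<in>Obs d m. D x * (\<Sum>a<K. (1 / real K) *
            (\<Sum>x'\<in>Obs d m. (trans_prob d pa T' h x a x' - trans_prob d pa Tstar h x a x') *
              (\<Sum>i<d. g i (restrict x (pa i)) a (x' i)))))
      = (\<Sum>x\<in>Obs d m. D x * (\<Sum>a<K. (1 / real K) *
            (\<Sum>i<d. \<Sum>y<m. (T' i h (restrict x (pa i)) a y - Tstar i h (restrict x (pa i)) a y) *
              g i (restrict x (pa i)) a y)))"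
    by (intro sum.cong refl arg_cong2[where f = "(*)"]) (simp add: expected_test_difference[OF T' h])
  also have "\<dots> = (\<Sum>x\<in>Obs d m. \<Sum>i<d. D x * Phi i (restrict x (pa i)))"
    by (simp add: Phi_def sum_distrib_left sum.swap[of _ "{..<K}"])
  also have "\<dots> = (\<Sum>i<d. \<Sum>z\<in>parent_configs i. marginal D i z * Phi i z)"
    by (subst sum.swap) (simp add: sum_Obs_by_parent_config)
  also have "\<dots> = (\<Sum>(i, z, a)\<in>feature_index.
            marginal D i z / real K * (\<Sum>y<m. (T' i h z a y - Tstar i h z a y) * g i z a y))"
    by (simp add: sum_feature_index Phi_def sum_distrib_left)
  finally show ?thesis .
qed

lemma W_F_eq_sum_marginal_l1_dist:
  assumes T': "T' \<in> fmodels H d m K pa" and h: "h < H"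
  shows "W_F H d m K pa R mu0 Tstar T T' h
       = (\<Sum>(i, z, a)\<in>feature_index.
            marginal (state_dist d m pa Tstar mu0 (greedy_policy H d m K pa R T) h) i z / real K
              * l1_dist h T' i z a)"
    (is "_ = ?R")
proof -
  let ?D = "state_dist d m pa Tstar mu0 (greedy_policy H d m K pa R T) h"
  let ?G = "{g :: nat \<Rightarrow> obs \<Rightarrow> nat \<Rightarrow> nat \<Rightarrow> real. \<forall>i z a y. g i z a y \<in> {-1, 1}}"
  let ?V = "\<lambda>g. \<Sum>(i, z, a)\<in>feature_index.
            marginal ?D i z / real K * (\<Sum>y<m. (T' i h z a y - Tstar i h z a y) * g i z a y)"
  have marginal_nonneg: "0 \<le> marginal ?D i z" for i z
    using greedy_state_dist_distribution(1) h by (intro marginal_nonneg) simp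
  have "W_F H d m K pa R mu0 Tstar T T' h = Sup (?V ` ?G)"
    unfolding W_F_def test_objective_eq[OF T' h] ..
  also have "\<dots> = ?R"
  proof (rule cSup_eq_maximum)
    define sign_test :: "nat \<Rightarrow> obs \<Rightarrow> nat \<Rightarrow> nat \<Rightarrow> real" where
      "sign_test i z a y = (if 0 \<le> T' i h z a y - Tstar i h z a y then 1 else -1)" for i z a y
    have abs_as_sign: "\<bar>c\<bar> = c * (if 0 \<le> c then 1 else -1)" for c :: real
      by simp
    have "?R = ?V sign_test"
      unfolding sign_test_def l1_dist_def by (simp only: abs_as_sign)
    moreover have "sign_test \<in> ?G"
      by (simp add: sign_test_def)
    ultimately show "?R \<in> ?V ` ?G"
      by blast
  next
    fix v assume "v \<in> ?V ` ?G"
    then obtain g where g: "g \<in> ?G" and v: "v = ?V g"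
      by blast
    have "(T' i h z a y - Tstar i h z a y) * g i z a y \<le> \<bar>T' i h z a y - Tstar i h z a y\<bar>" for i z a y
    proof -
      have "g i z a y \<in> {-1, 1}"
        using g by blast
      then show ?thesis
        by auto
    qed
    then show "v \<le> ?R"
      unfolding v l1_dist_def
      by (auto intro!: sum_mono divide_right_mono mult_left_mono simp: marginal_nonneg)
  qed
  finally show ?thesis .
qed

lemma sum_sq_marginal_le:
  assumes D_nonneg: "\<And>x. x \<in> Obs d m \<Longrightarrow> 0 \<le> D x" and D_sum: "(\<Sum>x\<in>Obs d m. D x) = 1"
  shows "(\<Sum>(i, z, a)\<in>feature_index. (marginal D i z / real K)\<^sup>2) \<le> real d / real K"
proof -
  have "(\<Sum>(i, z, a)\<in>feature_index. (marginal D i z / real K)\<^sup>2)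
      = (\<Sum>i<d. \<Sum>z\<in>parent_configs i. real K * (marginal D i z / real K)\<^sup>2)"
    by (simp add: sum_feature_index)
  also have "\<dots> \<le> (\<Sum>i<d. \<Sum>z\<in>parent_configs i. marginal D i z / real K)"
  proof (intro sum_mono)
    fix i z assume i: "i \<in> {..<d}" and z: "z \<in> parent_configs i"
    have "marginal D i z \<le> (\<Sum>z\<in>parent_configs i. marginal D i z)"
      using i z D_nonneg by (intro member_le_sum marginal_nonneg finite_parent_configs) auto
    then have "marginal D i z \<le> 1"
      using i by (simp add: sum_marginal D_sum)
    then have "(marginal D i z)\<^sup>2 \<le> marginal D i z"
      using marginal_nonneg[OF D_nonneg] by (simp add: power2_eq_square mult_left_le)
    then show "real K * (marginal D i z / real K)\<^sup>2 \<le> marginal D i z / real K"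
      using K_pos by (simp add: power2_eq_square divide_right_mono)
  qed
  also have "\<dots> = real d / real K"
    by (simp add: sum_divide_distrib[symmetric] sum_marginal D_sum)
  finally show ?thesis .
qed

lemma l1_dist_le_2:
  assumes T': "T' \<in> fmodels H d m K pa" and "i < d" "h < H" "z \<in> parent_configs i" "a < K"
  shows "l1_dist h T' i z a \<le> 2"
proof -
  have "l1_dist h T' i z a \<le> (\<Sum>y<m. T' i h z a y + Tstar i h z a y)"
    unfolding l1_dist_def
    using assms fmodels_nonneg[OF T'] fmodels_nonneg[OF Tstar_model]
    by (intro sum_mono abs_diff_le_iff) fastforce
  also have "\<dots> = 2"
    using assms fmodels_sum_eq_1[OF T'] fmodels_sum_eq_1[OF Tstar_model] by (simp add: sum.distrib)
  finally show ?thesis .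
qed

lemma sum_sq_l1_dist_le:
  assumes T': "T' \<in> fmodels H d m K pa" and h: "h < H"
  shows "(\<Sum>(i, z, a)\<in>feature_index. (l1_dist h T' i z a)\<^sup>2) \<le> 4 * real (card feature_index)"
proof -
  have "(l1_dist h T' i z a)\<^sup>2 \<le> 2\<^sup>2" if "(i, z, a) \<in> feature_index" for i z a
    using that l1_dist_le_2[OF T' _ h] unfolding feature_index_def l1_dist_def
    by (intro power_mono) (auto intro: sum_nonneg)
  then have "(\<Sum>(i, z, a)\<in>feature_index. (l1_dist h T' i z a)\<^sup>2) \<le> (\<Sum>s\<in>feature_index. 4)"
    by (intro sum_mono) auto
  then show ?thesis
    by simp
qed

lemma W_F_factorization:
  assumes h: "h < H"
  shows "\<exists>zeta chi. \<forall>T\<in>fmodels H d m K pa. \<forall>T'\<in>fmodels H d m K pa.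
          W_F H d m K pa R mu0 Tstar T T' h
            = vinner (L_dim d m K pa div m) (zeta T) (chi T') \<and>
          vnorm (L_dim d m K pa div m) (zeta T) * vnorm (L_dim d m K pa div m) (chi T')
            \<le> 2 * real (L_dim d m K pa) / real K"
proof -
  let ?N = "L_dim d m K pa div m"
  define D where "D T = state_dist d m pa Tstar mu0 (greedy_policy H d m K pa R T) h" for T
  obtain e where e: "bij_betw e {..<?N} feature_index"
    using ex_bij_betw_nat_finite[OF finite_feature_index]
    by (auto simp: card_feature_index_eq_L_dim_div atLeast0LessThan)
  define zeta where "zeta T j = (case e j of (i, z, a) \<Rightarrow> marginal (D T) i z / real K)" for T j
  define chi where "chi T' j = (case e j of (i, z, a) \<Rightarrow> l1_dist h T' i z a)" for T' j
  have inner: "W_F H d m K pa R mu0 Tstar T T' h = vinner ?N (zeta T) (chi T')"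
    if T': "T' \<in> fmodels H d m K pa" for T T'
    unfolding W_F_eq_sum_marginal_l1_dist[OF T' h] zeta_def chi_def vinner_bij_betw[OF e] D_def
    by (simp add: case_prod_beta)
  have zeta_bound: "vnorm ?N (zeta T) \<le> sqrt (real d / real K)" for T
    unfolding zeta_def vnorm_bij_betw[OF e] D_def
    using sum_sq_marginal_le[OF greedy_state_dist_distribution] h
    by (simp add: case_prod_beta)
  have chi_bound: "vnorm ?N (chi T') \<le> sqrt (4 * real ?N)" if T': "T' \<in> fmodels H d m K pa" for T'
    unfolding chi_def vnorm_bij_betw[OF e]
    using sum_sq_l1_dist_le[OF T' h] by (simp add: case_prod_beta card_feature_index_eq_L_dim_div)
  have norm_product: "vnorm ?N (zeta T) * vnorm ?N (chi T') \<le> 2 * real (L_dim d m K pa) / real K"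
    if T': "T' \<in> fmodels H d m K pa" for T T'
  proof -
    have "vnorm ?N (zeta T) * vnorm ?N (chi T') \<le> sqrt (real d / real K) * sqrt (4 * real ?N)"
      by (rule mult_mono[OF zeta_bound chi_bound[OF T']]) (simp_all add: vnorm_nonneg)
    also have "\<dots> \<le> 2 * real ?N / real K"
      using K_pos mult_le_card_feature_index
      by (intro sqrt_div_mult_sqrt_le) (simp_all add: card_feature_index_eq_L_dim_div)
    also have "\<dots> \<le> 2 * real (L_dim d m K pa) / real K"
      by (simp add: divide_right_mono)
    finally show ?thesis .
  qed
  show ?thesis
    using inner norm_product by blast
qed

end

theorem mainTheorem10:
  shows "\<exists>C::real. \<forall>H d m K (pa :: nat \<Rightarrow> nat set) (R :: nat \<Rightarrow> obs \<Rightarrow> nat \<Rightarrow> real)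
            (mu0 :: obs \<Rightarrow> real) (Tstar :: ftrans).
     0 < m \<and> 0 < K \<and> (\<forall>i<d. pa i \<subseteq> {..<d}) \<and>
     Tstar \<in> fmodels H d m K pa \<and>
     (\<forall>x\<in>Obs d m. 0 \<le> mu0 x) \<and> (\<Sum>x\<in>Obs d m. mu0 x) = 1 \<longrightarrow>
     (\<forall>h<H. \<exists>(zeta :: ftrans \<Rightarrow> nat \<Rightarrow> real) (chi :: ftrans \<Rightarrow> nat \<Rightarrow> real).
        \<forall>T\<in>fmodels H d m K pa. \<forall>T'\<in>fmodels H d m K pa.
          W_F H d m K pa R mu0 Tstar T T' h
            = vinner (L_dim d m K pa div m) (zeta T) (chi T') \<and>
          vnorm (L_dim d m K pa div m) (zeta T) * vnorm (L_dim d m K pa div m) (chi T')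
            \<le> C * real (L_dim d m K pa) / real K)"
  by (intro exI[of _ 2] allI impI factored_mdp.W_F_factorization) (auto simp: factored_mdp_def)

end
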